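(* Let $\eta>0$, $u>0$, and $r_\eta(\theta):=\frac{\eta-\sqrt{\eta^2+4\sin^2\theta}}{2\sin\theta}$ for $\theta\in(-\pi,0)$. Then $(-\pi,0)$ can be partitioned into at most 9 intervals on each of which the function \[ \theta\mapsto\arg\big\{1-u^2r_\eta^2(\theta)e^{2i\theta}\big\} \] is monotonic. Moreover, when $u\le1$ there exists $\tilde\theta_{\eta,u}\in(-\frac{\pi}{2},0)$ such that this function is decreasing on $(-\pi,-\tilde\theta_{\eta,u}-\pi)$, increasing on $(-\tilde\theta_{\eta,u}-\pi,\tilde\theta_{\eta,u})$ and decreasing on $(\tilde\theta_{\eta,u},0)$; here $\tilde\theta_{\eta,u}$ is the unique solution $\theta\in(-\frac{\pi}{2},0)$ of \[ -u^2r_\eta^8(\theta)-(1-u^2)r_\eta^6(\theta)+(5+u^2)r_\eta^4(\theta)-(u^2+4\eta^2+7)r_\eta^2(\theta)+3=0. \]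
   Context: $\arg$ denotes the principal argument with values in $(-\pi,\pi]$. *)

theory Defs
  imports "HOL-Analysis.Analysis"
begin

definition r_eta :: "real \<Rightarrow> real \<Rightarrow> real" where
  "r_eta \<eta> \<theta> = (\<eta> - sqrt (\<eta>\<^sup>2 + 4 * (sin \<theta>)\<^sup>2)) / (2 * sin \<theta>)"

definition arg_fun :: "real \<Rightarrow> real \<Rightarrow> real \<Rightarrow> real" where
  "arg_fun \<eta> u \<theta> = Arg (1 - complex_of_real (u\<^sup>2 * (r_eta \<eta> \<theta>)\<^sup>2) * exp (\<i> * complex_of_real (2 * \<theta>)))"

definition tilde_eq :: "real \<Rightarrow> real \<Rightarrow> real \<Rightarrow> real" where
  "tilde_eq \<eta> u \<theta> = (let r = r_eta \<eta> \<theta> in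
     - u\<^sup>2 * r ^ 8 - (1 - u\<^sup>2) * r ^ 6 + (5 + u\<^sup>2) * r ^ 4
     - (u\<^sup>2 + 4 * \<eta>\<^sup>2 + 7) * r\<^sup>2 + 3)"

end

theory Submission
  imports Defs
begin

(* Write x = r_eta(theta)^2. Clearing the denominator in the definition gives
   x = 1 - 2 eta / (eta + sqrt (eta^2 + 4 sin^2 theta)), a strictly increasing function of
   sin^2 theta with values in (0,1) when sin theta \<noteq> 0, together with the quadratic
   relation sin theta (1 - r_eta^2) = -eta r_eta. In terms of x the polynomial tilde_eq is
   -x (1 - x)^2 tilde_reduced x, and tilde_reduced is strictly increasing on (0,1). As tilde_eq
   is negative at -pi/2 and equals 3 at 0, it has exactly one zero theta_t in (-pi/2, 0), and on
   (-pi, 0) its sign is that of sin^2 theta_t - sin^2 theta.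
   Next, x' = 2 cot theta x (1 - x)/(1 + x), and differentiating arg (1 - u^2 x e^(2 i theta))
   shows that the derivative of arg_fun is a negative multiple of tilde_eq, written in the form
   of tilde_eq_trig. Hence arg_fun decreases on (-pi, -theta_t - pi) and (theta_t, 0), where
   sin^2 theta < sin^2 theta_t, and increases on (-theta_t - pi, theta_t); with the two turning
   points these are five intervals. *)

lemma eta_add_sqrt_pos: "\<eta> > 0 \<Longrightarrow> 0 < \<eta> + sqrt (\<eta>\<^sup>2 + 4 * (sin \<theta>)\<^sup>2)"
  by (intro add_pos_nonneg real_sqrt_ge_zero) auto

lemma r_eta_quadratic: "sin \<theta> * (1 - (r_eta \<eta> \<theta>)\<^sup>2) = - \<eta> * r_eta \<eta> \<theta>"
proof (cases "sin \<theta> = 0")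
  case True
  then show ?thesis by (simp add: r_eta_def)
next
  case False
  define q where "q = sqrt (\<eta>\<^sup>2 + 4 * (sin \<theta>)\<^sup>2)"
  have "q\<^sup>2 = \<eta>\<^sup>2 + 4 * (sin \<theta>)\<^sup>2"
    by (simp add: q_def)
  with False show ?thesis
    unfolding r_eta_def q_def[symmetric] by (simp add: field_simps power2_eq_square)
qed

lemma r_eta_sq:
  assumes "\<eta> > 0"
  shows "(r_eta \<eta> \<theta>)\<^sup>2 = 1 - 2 * \<eta> / (\<eta> + sqrt (\<eta>\<^sup>2 + 4 * (sin \<theta>)\<^sup>2))"
proof (cases "sin \<theta> = 0")
  case True
  with assms show ?thesis by (simp add: r_eta_def)
next
  case False
  define q where "q = sqrt (\<eta>\<^sup>2 + 4 * (sin \<theta>)\<^sup>2)"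
  have "q\<^sup>2 = \<eta>\<^sup>2 + 4 * (sin \<theta>)\<^sup>2" "\<eta> + q \<noteq> 0"
    using eta_add_sqrt_pos[OF assms, of \<theta>] by (simp_all add: q_def)
  with False show ?thesis
    unfolding r_eta_def q_def[symmetric] by (simp add: field_simps power2_eq_square) algebra
qed

lemma r_eta_sq_less_one: "\<eta> > 0 \<Longrightarrow> (r_eta \<eta> \<theta>)\<^sup>2 < 1"
  by (simp add: r_eta_sq eta_add_sqrt_pos)

lemma r_eta_sq_pos:
  assumes "\<eta> > 0" "sin \<theta> \<noteq> 0"
  shows "0 < (r_eta \<eta> \<theta>)\<^sup>2"
proof -
  have "sqrt (\<eta>\<^sup>2) < sqrt (\<eta>\<^sup>2 + 4 * (sin \<theta>)\<^sup>2)"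
    using assms(2) by (intro real_sqrt_less_mono) simp
  with assms show ?thesis
    by (simp add: r_eta_def)
qed

lemma r_eta_sq_strict_mono:
  assumes "\<eta> > 0" "(sin \<theta>)\<^sup>2 < (sin \<theta>')\<^sup>2"
  shows "(r_eta \<eta> \<theta>)\<^sup>2 < (r_eta \<eta> \<theta>')\<^sup>2"
proof -
  have "sqrt (\<eta>\<^sup>2 + 4 * (sin \<theta>)\<^sup>2) < sqrt (\<eta>\<^sup>2 + 4 * (sin \<theta>')\<^sup>2)"
    using assms(2) by simp
  then have "2 * \<eta> / (\<eta> + sqrt (\<eta>\<^sup>2 + 4 * (sin \<theta>')\<^sup>2)) < 2 * \<eta> / (\<eta> + sqrt (\<eta>\<^sup>2 + 4 * (sin \<theta>)\<^sup>2))"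
    using assms(1) by (intro divide_strict_left_mono) (auto intro: mult_pos_pos eta_add_sqrt_pos)
  then show ?thesis
    unfolding r_eta_sq[OF assms(1)] by linarith
qed

lemma continuous_on_r_eta_sq: "\<eta> > 0 \<Longrightarrow> continuous_on S (\<lambda>\<theta>. (r_eta \<eta> \<theta>)\<^sup>2)"
  unfolding r_eta_sq by (intro continuous_intros) (auto simp: eta_add_sqrt_pos[THEN order_less_imp_not_eq2])

lemma has_real_derivative_r_eta_sq:
  assumes "\<eta> > 0" "sin t \<noteq> 0"
  defines "x \<equiv> (r_eta \<eta> t)\<^sup>2"
  shows "((\<lambda>\<theta>. (r_eta \<eta> \<theta>)\<^sup>2) has_real_derivative 2 * cos t * x * (1 - x) / (sin t * (1 + x))) (at t)"
proof -
  define q where "q = sqrt (\<eta>\<^sup>2 + 4 * (sin t)\<^sup>2)"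
  have pos: "0 < \<eta>\<^sup>2 + 4 * (sin t)\<^sup>2"
    using assms(1) by (simp add: add_pos_nonneg)
  have q: "q\<^sup>2 = \<eta>\<^sup>2 + 4 * (sin t)\<^sup>2" "q > 0" "\<eta> + q > 0"
    using pos eta_add_sqrt_pos[OF assms(1), of t] by (simp_all add: q_def)
  have x: "x = 1 - 2 * \<eta> / (\<eta> + q)"
    unfolding x_def q_def using r_eta_sq[OF assms(1)] .
  define f where "f = (\<lambda>\<theta>. sqrt (\<eta>\<^sup>2 + 4 * (sin \<theta>)\<^sup>2))"
  have "(f has_real_derivative 4 * sin t * cos t / q) (at t)"
    unfolding f_def using pos q(2) by (auto intro!: derivative_eq_intros simp: q_def[symmetric] field_simps)
  moreover have "f t = q"
    by (simp add: f_def q_def)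
  ultimately have "((\<lambda>\<theta>. 1 - 2 * \<eta> / (\<eta> + f \<theta>)) has_real_derivative
          8 * \<eta> * sin t * cos t / (q * (\<eta> + q)\<^sup>2)) (at t)"
    using q(2,3) by (auto intro!: derivative_eq_intros simp: field_simps power2_eq_square)
  moreover have "2 * cos t * x * (1 - x) / (sin t * (1 + x)) = 8 * \<eta> * sin t * cos t / (q * (\<eta> + q)\<^sup>2)"
  proof -
    have "x * (\<eta> + q) = q - \<eta>"
      unfolding x using q(3) by (simp add: field_simps)
    then have "2 * cos t * x * (1 - x) * (q * (\<eta> + q)\<^sup>2) = 8 * \<eta> * sin t * cos t * (sin t * (1 + x))"
      using q(1,3) by algebra
    moreover have "sin t * (1 + x) \<noteq> 0" "q * (\<eta> + q)\<^sup>2 \<noteq> 0"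
      using assms(2) q(2,3) by (auto simp: x_def add_nonneg_eq_0_iff)
    ultimately show ?thesis
      by (simp add: frac_eq_eq)
  qed
  ultimately show ?thesis
    by (simp add: r_eta_sq[OF assms(1), abs_def] f_def)
qed

definition tilde_poly :: "real \<Rightarrow> real \<Rightarrow> real \<Rightarrow> real" where
  "tilde_poly \<eta> u x = - u\<^sup>2 * x ^ 4 - (1 - u\<^sup>2) * x ^ 3 + (5 + u\<^sup>2) * x\<^sup>2 - (u\<^sup>2 + 4 * \<eta>\<^sup>2 + 7) * x + 3"

definition tilde_reduced :: "real \<Rightarrow> real \<Rightarrow> real \<Rightarrow> real" where
  "tilde_reduced \<eta> u x = u\<^sup>2 * (x + 1) + 1 - 3 / x + 4 * \<eta>\<^sup>2 / (1 - x)\<^sup>2"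

lemma tilde_eq_eq_tilde_poly: "tilde_eq \<eta> u \<theta> = tilde_poly \<eta> u ((r_eta \<eta> \<theta>)\<^sup>2)"
  by (simp add: tilde_eq_def tilde_poly_def Let_def flip: power_mult)

lemma tilde_poly_factor:
  assumes "x \<noteq> 0" "x \<noteq> 1"
  shows "tilde_poly \<eta> u x = - (x * (1 - x)\<^sup>2 * tilde_reduced \<eta> u x)"
proof -
  have "x * (1 - x)\<^sup>2 * tilde_reduced \<eta> u x
      = u\<^sup>2 * x * (x + 1) * (1 - x)\<^sup>2 + x * (1 - x)\<^sup>2 - 3 * (1 - x)\<^sup>2 + 4 * \<eta>\<^sup>2 * x"
    using assms by (simp add: tilde_reduced_def field_simps)
  then show ?thesis
    by (simp add: tilde_poly_def power2_eq_square power3_eq_cube power4_eq_xxxx algebra_simps)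
qed

lemma strict_mono_on_tilde_reduced: "strict_mono_on {0<..<1} (tilde_reduced \<eta> u)"
proof (rule strict_mono_onI)
  fix a b :: real
  assume "a \<in> {0<..<1}" "b \<in> {0<..<1}" "a < b"
  then have "0 < a" "a < b" "b < 1"
    by auto
  then have "u\<^sup>2 * (a + 1) \<le> u\<^sup>2 * (b + 1)"
    by (intro mult_left_mono) auto
  moreover have "3 / b < 3 / a"
      "4 * \<eta>\<^sup>2 / (1 - a)\<^sup>2 \<le> 4 * \<eta>\<^sup>2 / (1 - b)\<^sup>2"
    using \<open>0 < a\<close> \<open>a < b\<close> \<open>b < 1\<close>
    by (auto intro!: divide_left_mono power_mono divide_strict_left_mono mult_pos_pos)
  ultimately show "tilde_reduced \<eta> u a < tilde_reduced \<eta> u b"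
    unfolding tilde_reduced_def by linarith
qed

lemma tilde_eq_trig:
  fixes \<eta> u \<theta> :: real
  defines "x \<equiv> (r_eta \<eta> \<theta>)\<^sup>2"
  shows "tilde_eq \<eta> u \<theta> = ((1 + x) * (cos (2 * \<theta>) - u\<^sup>2 * x) + 2 * (cos \<theta>)\<^sup>2 * (1 - x)) * (1 - x)\<^sup>2"
proof -
  have hs: "(sin \<theta>)\<^sup>2 * (1 - x)\<^sup>2 = \<eta>\<^sup>2 * x"
    using arg_cong[OF r_eta_quadratic[of \<theta> \<eta>], of "\<lambda>v. v\<^sup>2"] by (simp add: x_def power_mult_distrib)
  have cos: "cos (2 * \<theta>) = 1 - 2 * (sin \<theta>)\<^sup>2" "(cos \<theta>)\<^sup>2 = 1 - (sin \<theta>)\<^sup>2"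
    by (simp_all add: cos_double_sin cos_squared_eq)
  have "((1 + x) * (cos (2 * \<theta>) - u\<^sup>2 * x) + 2 * (cos \<theta>)\<^sup>2 * (1 - x)) * (1 - x)\<^sup>2
      = ((1 + x) * (1 - u\<^sup>2 * x) + 2 * (1 - x)) * (1 - x)\<^sup>2 - 4 * ((sin \<theta>)\<^sup>2 * (1 - x)\<^sup>2)"
    unfolding cos by (simp add: algebra_simps)
  also have "\<dots> = ((1 + x) * (1 - u\<^sup>2 * x) + 2 * (1 - x)) * (1 - x)\<^sup>2 - 4 * (\<eta>\<^sup>2 * x)"
    unfolding hs ..
  also have "\<dots> = tilde_poly \<eta> u x"
    by (simp add: tilde_poly_def power2_eq_square power3_eq_cube power4_eq_xxxx algebra_simps)
  finally show ?thesis
    by (simp add: tilde_eq_eq_tilde_poly x_def)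
qed

lemma tilde_eq_sign:
  assumes "\<eta> > 0" "sin \<theta>\<^sub>0 \<noteq> 0" "tilde_eq \<eta> u \<theta>\<^sub>0 = 0" "sin \<theta> \<noteq> 0"
  shows "(sin \<theta>)\<^sup>2 < (sin \<theta>\<^sub>0)\<^sup>2 \<Longrightarrow> 0 < tilde_eq \<eta> u \<theta>"
    and "(sin \<theta>\<^sub>0)\<^sup>2 < (sin \<theta>)\<^sup>2 \<Longrightarrow> tilde_eq \<eta> u \<theta> < 0"
proof -
  have range: "(r_eta \<eta> t)\<^sup>2 \<in> {0<..<1}" if "sin t \<noteq> 0" for t
    using r_eta_sq_pos[OF assms(1) that] r_eta_sq_less_one[OF assms(1)] by simp
  have factor: "tilde_eq \<eta> u t = - ((r_eta \<eta> t)\<^sup>2 * (1 - (r_eta \<eta> t)\<^sup>2)\<^sup>2 * tilde_reduced \<eta> u ((r_eta \<eta> t)\<^sup>2))"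
    and weight: "0 < (r_eta \<eta> t)\<^sup>2 * (1 - (r_eta \<eta> t)\<^sup>2)\<^sup>2" if "sin t \<noteq> 0" for t
    using range[OF that] by (auto simp: tilde_eq_eq_tilde_poly tilde_poly_factor)
  have zero: "tilde_reduced \<eta> u ((r_eta \<eta> \<theta>\<^sub>0)\<^sup>2) = 0"
    using assms(3) factor[OF assms(2)] weight[OF assms(2)] by (metis mult_eq_0_iff neg_equal_0_iff_equal less_irrefl)
  show "0 < tilde_eq \<eta> u \<theta>" if "(sin \<theta>)\<^sup>2 < (sin \<theta>\<^sub>0)\<^sup>2"
  proof -
    have "tilde_reduced \<eta> u ((r_eta \<eta> \<theta>)\<^sup>2) < 0"
      using strict_mono_onD[OF strict_mono_on_tilde_reduced[of \<eta> u] range[OF assms(4)] range[OF assms(2)]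
          r_eta_sq_strict_mono[OF assms(1) that]] zero by simp
    then show ?thesis
      using factor[OF assms(4)] weight[OF assms(4)] by (simp add: mult_pos_neg)
  qed
  show "tilde_eq \<eta> u \<theta> < 0" if "(sin \<theta>\<^sub>0)\<^sup>2 < (sin \<theta>)\<^sup>2"
  proof -
    have "0 < tilde_reduced \<eta> u ((r_eta \<eta> \<theta>)\<^sup>2)"
      using strict_mono_onD[OF strict_mono_on_tilde_reduced[of \<eta> u] range[OF assms(2)] range[OF assms(4)]
          r_eta_sq_strict_mono[OF assms(1) that]] zero by simp
    then show ?thesis
      using factor[OF assms(4)] weight[OF assms(4)] by simp
  qed
qed

lemma tilde_eq_neg_at_minus_pi_half:
  assumes "\<eta> > 0"
  shows "tilde_eq \<eta> u (- pi / 2) < 0"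
proof -
  define x where "x = (r_eta \<eta> (- pi / 2))\<^sup>2"
  have x: "0 < x" "x < 1"
    using r_eta_sq_pos[OF assms, of "- pi / 2"] r_eta_sq_less_one[OF assms] by (simp_all add: x_def)
  have "(1 - x)\<^sup>2 = \<eta>\<^sup>2 * x"
    using arg_cong[OF r_eta_quadratic[of "- pi / 2" \<eta>], of "\<lambda>v. v\<^sup>2"] by (simp add: x_def power_mult_distrib power2_commute)
  then have "tilde_reduced \<eta> u x = u\<^sup>2 * (x + 1) + 1 + 1 / x"
    using x assms by (simp add: tilde_reduced_def field_simps)
  also have "\<dots> > 0"
    using x by (simp add: add_pos_pos add_nonneg_pos)
  finally have "tilde_reduced \<eta> u x > 0" .
  with x show ?thesis
    unfolding tilde_eq_eq_tilde_poly x_def[symmetric] by (simp add: tilde_poly_factor)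
qed

lemma tilde_eq_at_0: "tilde_eq \<eta> u 0 = 3"
  by (simp add: tilde_eq_def r_eta_def)

lemma continuous_on_tilde_eq: "\<eta> > 0 \<Longrightarrow> continuous_on S (tilde_eq \<eta> u)"
  unfolding tilde_eq_eq_tilde_poly[abs_def] tilde_poly_def
  by (intro continuous_intros continuous_on_r_eta_sq)

lemma tilde_eq_has_zero:
  assumes "\<eta> > 0"
  obtains \<theta> where "\<theta> \<in> {- pi / 2<..<0}" "tilde_eq \<eta> u \<theta> = 0"
proof -
  have "\<exists>\<theta>. - pi / 2 \<le> \<theta> \<and> \<theta> \<le> 0 \<and> tilde_eq \<eta> u \<theta> = 0"
    using tilde_eq_neg_at_minus_pi_half[OF assms, of u]
    by (intro IVT') (simp_all add: tilde_eq_at_0 continuous_on_tilde_eq[OF assms])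
  then obtain \<theta> where "- pi / 2 \<le> \<theta>" "\<theta> \<le> 0" "tilde_eq \<eta> u \<theta> = 0"
    by blast
  moreover have "\<theta> \<noteq> - pi / 2" "\<theta> \<noteq> 0"
    using calculation tilde_eq_neg_at_minus_pi_half[OF assms, of u] tilde_eq_at_0[of \<eta> u] by auto
  ultimately show ?thesis
    using that[of \<theta>] by (simp add: less_le)
qed

lemma has_real_derivative_Arg:
  fixes z :: "real \<Rightarrow> complex"
  assumes z': "(z has_vector_derivative z') (at t)" and notin: "z t \<notin> \<real>\<^sub>\<le>\<^sub>0"
  shows "((\<lambda>s. Arg (z s)) has_real_derivative Im (z' / z t)) (at t)"
proof -
  have "((Ln \<circ> z) has_vector_derivative z' * inverse (z t)) (at t)"
    by (rule field_vector_diff_chain_at[OF z' has_field_derivative_Ln[OF notin]])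
  then have Im_Ln: "((\<lambda>s. Im (Ln (z s))) has_real_derivative Im (z' / z t)) (at t)"
    by (simp add: has_vector_derivative_complex_iff divide_inverse)
  have "z t \<noteq> 0"
    using notin by auto
  then obtain e where "e > 0" and e: "\<And>s. dist t s < e \<Longrightarrow> z s \<noteq> 0"
    using continuous_at_avoid[OF has_vector_derivative_continuous[OF z']] by blast
  have "\<forall>s. dist s t < e \<longrightarrow> Im (Ln (z s)) = Arg (z s)"
    using e by (simp add: dist_commute Arg_eq_Im_Ln)
  then have "\<forall>\<^sub>F s in nhds t. Im (Ln (z s)) = Arg (z s)"
    unfolding eventually_nhds_metric using \<open>e > 0\<close> by blast
  then show ?thesis
    by (rule DERIV_cong_ev[THEN iffD1, OF refl _ refl Im_Ln])
qed

lemma has_real_derivative_Arg_one_minus_rotation: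
  fixes w :: "real \<Rightarrow> real"
  assumes w': "(w has_real_derivative w') (at t)"
    and notin: "1 - of_real (w t) * exp (\<i> * of_real (2 * t)) \<notin> \<real>\<^sub>\<le>\<^sub>0"
  shows "((\<lambda>s. Arg (1 - of_real (w s) * exp (\<i> * of_real (2 * s)))) has_real_derivative
           (2 * (w t)\<^sup>2 - 2 * w t * cos (2 * t) - w' * sin (2 * t))
             / (cmod (1 - of_real (w t) * exp (\<i> * of_real (2 * t))))\<^sup>2) (at t)"
proof -
  define z where "z = (\<lambda>s. 1 - of_real (w s) * exp (\<i> * of_real (2 * s)))"
  define E where "E = exp (\<i> * of_real (2 * t))"
  have "((\<lambda>x. exp (\<i> * (2 * x))) has_field_derivative 2 * \<i> * E) (at (of_real t))"
    unfolding E_def by (auto intro!: derivative_eq_intros)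
  from has_vector_derivative_real_field[OF this]
  have rotation: "((\<lambda>s. exp (\<i> * of_real (2 * s))) has_vector_derivative 2 * \<i> * E) (at t)"
    by simp
  have "(z has_vector_derivative - (of_real w' + 2 * \<i> * of_real (w t)) * E) (at t)"
  proof (rule has_vector_derivative_eq_rhs)
    show "(z has_vector_derivative 0 - (of_real (w t) * (2 * \<i> * E) + of_real w' * E)) (at t)"
      unfolding z_def E_def
      by (intro has_vector_derivative_diff has_vector_derivative_const has_vector_derivative_mult
          has_vector_derivative_of_real w' rotation[unfolded E_def])
  qed (simp add: algebra_simps)
  moreover have "z t \<notin> \<real>\<^sub>\<le>\<^sub>0"
    using notin by (simp add: z_def)
  ultimately have "((\<lambda>s. Arg (z s)) has_real_derivative Im (- (of_real w' + 2 * \<i> * of_real (w t)) * E / z t)) (at t)"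
    by (rule has_real_derivative_Arg)
  then have "((\<lambda>s. Arg (z s)) has_real_derivative
           (2 * (w t)\<^sup>2 - 2 * w t * cos (2 * t) - w' * sin (2 * t)) / (cmod (z t))\<^sup>2) (at t)"
  proof (rule DERIV_cong)
    have "Re E = cos (2 * t)" "Im E = sin (2 * t)"
      by (simp_all add: E_def Re_exp Im_exp)
    then have "Im (- (of_real w' + 2 * \<i> * of_real (w t)) * E) * Re (1 - of_real (w t) * E)
          - Re (- (of_real w' + 2 * \<i> * of_real (w t)) * E) * Im (1 - of_real (w t) * E)
        = (- (w' * sin (2 * t)) - 2 * w t * cos (2 * t)) * (1 - w t * cos (2 * t))
          + (2 * w t * sin (2 * t) - w' * cos (2 * t)) * (w t * sin (2 * t))"
      by simp
    also have "\<dots> = 2 * (w t)\<^sup>2 - 2 * w t * cos (2 * t) - w' * sin (2 * t)"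
      using sin_cos_squared_add[of "2 * t"] by algebra
    moreover have "z t = 1 - of_real (w t) * E"
      by (simp add: z_def E_def)
    ultimately show "Im (- (of_real w' + 2 * \<i> * of_real (w t)) * E / z t)
        = (2 * (w t)\<^sup>2 - 2 * w t * cos (2 * t) - w' * sin (2 * t)) / (cmod (z t))\<^sup>2"
      by (simp only: Im_divide cmod_power2)
  qed
  then show ?thesis
    by (simp add: z_def)
qed

lemma one_minus_rotation_notin_nonpos_Reals:
  fixes W :: real
  assumes "W > 0" "sin \<theta> \<noteq> 0"
  shows "1 - of_real W * exp (\<i> * of_real (2 * \<theta>)) \<notin> \<real>\<^sub>\<le>\<^sub>0"
proof
  assume "1 - of_real W * exp (\<i> * of_real (2 * \<theta>)) \<in> \<real>\<^sub>\<le>\<^sub>0"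
  then have "W * sin (2 * \<theta>) = 0" "1 - W * cos (2 * \<theta>) \<le> 0"
    by (auto simp: complex_nonpos_Reals_iff Re_exp Im_exp)
  then have "cos \<theta> = 0" "1 - W * cos (2 * \<theta>) \<le> 0"
    using assms by (auto simp: sin_double)
  then show False
    using assms(1) by (simp add: cos_double_cos)
qed

lemma arg_fun_has_real_derivative:
  assumes "\<eta> > 0" "u > 0" "sin \<theta> \<noteq> 0"
  obtains c where "c > 0" "(arg_fun \<eta> u has_real_derivative - c * tilde_eq \<eta> u \<theta>) (at \<theta>)"
proof -
  define x where "x = (r_eta \<eta> \<theta>)\<^sup>2"
  define w where "w = (\<lambda>t. u\<^sup>2 * (r_eta \<eta> t)\<^sup>2)"
  define z where "z = 1 - of_real (w \<theta>) * exp (\<i> * of_real (2 * \<theta>))"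
  define w' where "w' = u\<^sup>2 * (2 * cos \<theta> * x * (1 - x) / (sin \<theta> * (1 + x)))"
  have x: "0 < x" "x < 1"
    using r_eta_sq_pos[OF assms(1,3)] r_eta_sq_less_one[OF assms(1)] by (simp_all add: x_def)
  have W: "w \<theta> = u\<^sup>2 * x" "w \<theta> > 0"
    using x assms(2) by (simp_all add: w_def x_def)
  have w': "(w has_real_derivative w') (at \<theta>)"
    unfolding w_def w'_def x_def by (intro DERIV_cmult has_real_derivative_r_eta_sq assms)
  have notin: "z \<notin> \<real>\<^sub>\<le>\<^sub>0"
    unfolding z_def using W(2) assms(3) by (rule one_minus_rotation_notin_nonpos_Reals)
  have "arg_fun \<eta> u = (\<lambda>s. Arg (1 - of_real (w s) * exp (\<i> * of_real (2 * s))))"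
    by (simp add: fun_eq_iff arg_fun_def w_def)
  then have deriv: "(arg_fun \<eta> u has_real_derivative
      (2 * (w \<theta>)\<^sup>2 - 2 * w \<theta> * cos (2 * \<theta>) - w' * sin (2 * \<theta>)) / (cmod z)\<^sup>2) (at \<theta>)"
    unfolding z_def using has_real_derivative_Arg_one_minus_rotation[OF w' notin[unfolded z_def]] by simp
  define A where "A = (1 + x) * (cos (2 * \<theta>) - w \<theta>) + 2 * (cos \<theta>)\<^sup>2 * (1 - x)"
  have "w' * sin (2 * \<theta>) = 4 * w \<theta> * (cos \<theta>)\<^sup>2 * (1 - x) / (1 + x)"
    using assms(3) by (simp add: w'_def W(1) sin_double power2_eq_square)
  then have numerator: "2 * (w \<theta>)\<^sup>2 - 2 * w \<theta> * cos (2 * \<theta>) - w' * sin (2 * \<theta>) = - 2 * w \<theta> * A / (1 + x)"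
    using x by (simp add: A_def field_simps power2_eq_square)
  have tilde: "tilde_eq \<eta> u \<theta> = A * (1 - x)\<^sup>2"
    unfolding tilde_eq_trig A_def x_def[symmetric] W(1) ..
  have "z \<noteq> 0"
    using notin by auto
  define c where "c = 2 * w \<theta> / ((1 + x) * (1 - x)\<^sup>2 * (cmod z)\<^sup>2)"
  have "c > 0"
    using x W(2) \<open>z \<noteq> 0\<close> by (simp add: c_def)
  moreover have "- 2 * w \<theta> * A / (1 + x) / (cmod z)\<^sup>2 = - c * tilde_eq \<eta> u \<theta>"
  proof -
    have "1 + x \<noteq> 0" "(1 - x)\<^sup>2 \<noteq> 0" "(cmod z)\<^sup>2 \<noteq> 0"
      using x \<open>z \<noteq> 0\<close> by auto
    then show ?thesis
      by (simp add: c_def tilde)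
  qed
  ultimately show ?thesis
    using that deriv[unfolded numerator] by metis
qed

lemma DERIV_pos_imp_strict_mono_on:
  fixes f :: "real \<Rightarrow> real"
  assumes "\<And>x. a < x \<Longrightarrow> x < b \<Longrightarrow> \<exists>y. (f has_real_derivative y) (at x) \<and> y > 0"
  shows "strict_mono_on {a<..<b} f"
proof (rule strict_mono_onI)
  fix r s
  assume "r \<in> {a<..<b}" "s \<in> {a<..<b}" "r < s"
  then show "f r < f s"
    by (intro DERIV_pos_imp_increasing[OF \<open>r < s\<close>] assms) auto
qed

lemma DERIV_neg_imp_strict_antimono_on:
  fixes f :: "real \<Rightarrow> real"
  assumes "\<And>x. a < x \<Longrightarrow> x < b \<Longrightarrow> \<exists>y. (f has_real_derivative y) (at x) \<and> y < 0"
  shows "strict_antimono_on {a<..<b} f"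
proof (rule monotone_onI)
  fix r s
  assume "r \<in> {a<..<b}" "s \<in> {a<..<b}" "r < s"
  then show "f s < f r"
    by (intro DERIV_neg_imp_decreasing[OF \<open>r < s\<close>] assms) auto
qed

lemma arg_fun_strict_mono_on:
  assumes "\<eta> > 0" "u > 0" "\<And>\<theta>. a < \<theta> \<Longrightarrow> \<theta> < b \<Longrightarrow> sin \<theta> \<noteq> 0 \<and> tilde_eq \<eta> u \<theta> < 0"
  shows "strict_mono_on {a<..<b} (arg_fun \<eta> u)"
proof (rule DERIV_pos_imp_strict_mono_on)
  fix \<theta>
  assume "a < \<theta>" "\<theta> < b"
  then have "sin \<theta> \<noteq> 0" "tilde_eq \<eta> u \<theta> < 0"
    using assms(3) by auto
  moreover obtain c where "c > 0" "(arg_fun \<eta> u has_real_derivative - c * tilde_eq \<eta> u \<theta>) (at \<theta>)"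
    using arg_fun_has_real_derivative[OF assms(1,2) \<open>sin \<theta> \<noteq> 0\<close>] by blast
  ultimately show "\<exists>y. (arg_fun \<eta> u has_real_derivative y) (at \<theta>) \<and> y > 0"
    by (intro exI[of _ "- c * tilde_eq \<eta> u \<theta>"]) (simp add: mult_pos_neg)
qed

lemma arg_fun_strict_antimono_on:
  assumes "\<eta> > 0" "u > 0" "\<And>\<theta>. a < \<theta> \<Longrightarrow> \<theta> < b \<Longrightarrow> sin \<theta> \<noteq> 0 \<and> tilde_eq \<eta> u \<theta> > 0"
  shows "strict_antimono_on {a<..<b} (arg_fun \<eta> u)"
proof (rule DERIV_neg_imp_strict_antimono_on)
  fix \<theta>
  assume "a < \<theta>" "\<theta> < b"
  then have "sin \<theta> \<noteq> 0" "tilde_eq \<eta> u \<theta> > 0"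
    using assms(3) by auto
  moreover obtain c where "c > 0" "(arg_fun \<eta> u has_real_derivative - c * tilde_eq \<eta> u \<theta>) (at \<theta>)"
    using arg_fun_has_real_derivative[OF assms(1,2) \<open>sin \<theta> \<noteq> 0\<close>] by blast
  ultimately show "\<exists>y. (arg_fun \<eta> u has_real_derivative y) (at \<theta>) \<and> y < 0"
    by (intro exI[of _ "- c * tilde_eq \<eta> u \<theta>"]) simp
qed

lemma sin_less_zero_of_gt_minus_pi: "- pi < \<theta> \<Longrightarrow> \<theta> < 0 \<Longrightarrow> sin \<theta> < 0"
  using sin_gt_zero[of "- \<theta>"] by simp

lemma sin_sq_compare:
  assumes "- pi / 2 < a" "a < 0" "- pi < \<theta>" "\<theta> < 0"
  shows "\<theta> < - a - pi \<or> a < \<theta> \<Longrightarrow> (sin \<theta>)\<^sup>2 < (sin a)\<^sup>2"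
    and "- a - pi < \<theta> \<Longrightarrow> \<theta> < a \<Longrightarrow> (sin a)\<^sup>2 < (sin \<theta>)\<^sup>2"
proof -
  define \<phi> where "\<phi> = (if \<theta> < - pi / 2 then - pi - \<theta> else \<theta>)"
  have "sin \<phi> = sin \<theta>"
    by (simp add: \<phi>_def sin_diff)
  have \<phi>: "- (pi / 2) \<le> \<phi>" "\<phi> \<le> pi / 2" "- (pi / 2) \<le> a" "a \<le> pi / 2"
    using assms by (auto simp: \<phi>_def)
  have sq_less_iff: "x\<^sup>2 < y\<^sup>2 \<longleftrightarrow> y < x" if "x < 0" "y < 0" for x y :: real
    using abs_le_square_iff[of y x] that by auto
  have neg: "sin a < 0" "sin \<theta> < 0"
    using assms by (simp_all add: sin_less_zero_of_gt_minus_pi)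
  show "(sin \<theta>)\<^sup>2 < (sin a)\<^sup>2" if "\<theta> < - a - pi \<or> a < \<theta>"
  proof -
    have "a < \<phi>"
      using that assms by (auto simp: \<phi>_def)
    then show ?thesis
      using sin_mono_less_eq[OF \<phi>(3,4,1,2)] \<open>sin \<phi> = sin \<theta>\<close> neg sq_less_iff by simp
  qed
  show "(sin a)\<^sup>2 < (sin \<theta>)\<^sup>2" if "- a - pi < \<theta>" "\<theta> < a"
  proof -
    have "\<phi> < a"
      using that assms by (auto simp: \<phi>_def)
    then show ?thesis
      using sin_mono_less_eq[OF \<phi>(1,2,3,4)] \<open>sin \<phi> = sin \<theta>\<close> neg sq_less_iff by simp
  qed
qed

lemma arg_fun_turning_point:
  assumes "\<eta> > 0" "u > 0"
  obtains \<theta>t where "\<theta>t \<in> {- pi / 2<..<0}" "tilde_eq \<eta> u \<theta>t = 0"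
    "\<forall>\<theta>\<in>{- pi / 2<..<0}. tilde_eq \<eta> u \<theta> = 0 \<longrightarrow> \<theta> = \<theta>t"
    "strict_antimono_on {- pi<..<- \<theta>t - pi} (arg_fun \<eta> u)"
    "strict_mono_on {- \<theta>t - pi<..<\<theta>t} (arg_fun \<eta> u)"
    "strict_antimono_on {\<theta>t<..<0} (arg_fun \<eta> u)"
proof -
  obtain \<theta>t where \<theta>t: "\<theta>t \<in> {- pi / 2<..<0}" "tilde_eq \<eta> u \<theta>t = 0"
    using tilde_eq_has_zero[OF assms(1)] .
  then have range: "- pi / 2 < \<theta>t" "\<theta>t < 0" "sin \<theta>t \<noteq> 0"
    using sin_less_zero_of_gt_minus_pi[of \<theta>t] by auto
  have pos: "sin \<theta> \<noteq> 0 \<and> tilde_eq \<eta> u \<theta> > 0"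
    if "- pi < \<theta>" "\<theta> < 0" "\<theta> < - \<theta>t - pi \<or> \<theta>t < \<theta>" for \<theta>
  proof -
    have "sin \<theta> \<noteq> 0"
      using sin_less_zero_of_gt_minus_pi[OF that(1,2)] by simp
    moreover have "(sin \<theta>)\<^sup>2 < (sin \<theta>t)\<^sup>2"
      by (rule sin_sq_compare(1)[OF range(1,2) that])
    ultimately show ?thesis
      using tilde_eq_sign(1)[OF assms(1) range(3) \<theta>t(2)] by blast
  qed
  have neg: "sin \<theta> \<noteq> 0 \<and> tilde_eq \<eta> u \<theta> < 0" if "- \<theta>t - pi < \<theta>" "\<theta> < \<theta>t" for \<theta>
  proof -
    have "- pi < \<theta>" "\<theta> < 0"
      using that range(1,2) by linarith+
    then have "sin \<theta> \<noteq> 0"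
      using sin_less_zero_of_gt_minus_pi by force
    moreover have "(sin \<theta>t)\<^sup>2 < (sin \<theta>)\<^sup>2"
      by (rule sin_sq_compare(2)[OF range(1,2) \<open>- pi < \<theta>\<close> \<open>\<theta> < 0\<close> that])
    ultimately show ?thesis
      using tilde_eq_sign(2)[OF assms(1) range(3) \<theta>t(2)] by blast
  qed
  show ?thesis
  proof (rule that[OF \<theta>t])
    show "\<forall>\<theta>\<in>{- pi / 2<..<0}. tilde_eq \<eta> u \<theta> = 0 \<longrightarrow> \<theta> = \<theta>t"
    proof (intro ballI impI)
      fix \<theta>
      assume "\<theta> \<in> {- pi / 2<..<0}" "tilde_eq \<eta> u \<theta> = 0"
      then have "- pi / 2 < \<theta>" "\<theta> < 0" "tilde_eq \<eta> u \<theta> = 0"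
        by auto
      then have "\<not> \<theta> < \<theta>t" "\<not> \<theta>t < \<theta>"
        using neg[of \<theta>] pos[of \<theta>] range(1) by auto
      then show "\<theta> = \<theta>t"
        by linarith
    qed
    show "strict_antimono_on {- pi<..<- \<theta>t - pi} (arg_fun \<eta> u)"
      using range by (intro arg_fun_strict_antimono_on assms pos) auto
    show "strict_mono_on {- \<theta>t - pi<..<\<theta>t} (arg_fun \<eta> u)"
      by (intro arg_fun_strict_mono_on assms neg)
    show "strict_antimono_on {\<theta>t<..<0} (arg_fun \<eta> u)"
      using range by (intro arg_fun_strict_antimono_on assms pos) auto
  qed
qed

lemma three_piece_monotone_partition:
  fixes f :: "real \<Rightarrow> real"
  assumes "a < b" "b < c" "c < d"
    and "antimono_on {a<..<b} f" "mono_on {b<..<c} f" "antimono_on {c<..<d} f"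
  shows "\<exists>P. finite P \<and> card P \<le> 5 \<and> pairwise disjnt P \<and> \<Union>P = {a<..<d} \<and>
           (\<forall>I\<in>P. is_interval I \<and> (mono_on I f \<or> antimono_on I f))"
proof (intro exI conjI)
  define P where "P = set [{a<..<b}, {b}, {b<..<c}, {c}, {c<..<d}]"
  show "finite P"
    by (simp add: P_def)
  show "card P \<le> 5"
    unfolding P_def using card_length[of "[{a<..<b}, {b}, {b<..<c}, {c}, {c<..<d}]"] by simp
  show "pairwise disjnt P"
    using assms(1-3) by (auto simp: P_def pairwise_def disjnt_def)
  show "\<Union>P = {a<..<d}"
    using assms(1-3) by (auto simp: P_def)
  have "mono_on {x} f" for x
    by (simp add: monotone_on_def)
  then show "\<forall>I\<in>P. is_interval I \<and> (mono_on I f \<or> antimono_on I f)"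
    using assms(4-6) by (auto simp: P_def is_interval_1)
qed

theorem lemma5p2:
  fixes \<eta> u :: real
  assumes "\<eta> > 0" and "u > 0"
  shows "(\<exists>P :: real set set. finite P \<and> card P \<le> 9 \<and> pairwise disjnt P \<and>
            \<Union>P = {-pi<..<0} \<and>
            (\<forall>I\<in>P. is_interval I \<and>
                 (mono_on I (arg_fun \<eta> u) \<or> antimono_on I (arg_fun \<eta> u))))
       \<and> (u \<le> 1 \<longrightarrow>
           (\<exists>\<theta>t. \<theta>t \<in> {-pi/2<..<0} \<and> tilde_eq \<eta> u \<theta>t = 0 \<and>
              (\<forall>\<theta>\<in>{-pi/2<..<0}. tilde_eq \<eta> u \<theta> = 0 \<longrightarrow> \<theta> = \<theta>t) \<and>
              strict_antimono_on {-pi<..<-\<theta>t-pi} (arg_fun \<eta> u) \<and>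
              strict_mono_on {-\<theta>t-pi<..<\<theta>t} (arg_fun \<eta> u) \<and>
              strict_antimono_on {\<theta>t<..<0} (arg_fun \<eta> u)))"
proof -
  obtain \<theta>t where \<theta>t: "\<theta>t \<in> {-pi/2<..<0}" "tilde_eq \<eta> u \<theta>t = 0"
      "\<forall>\<theta>\<in>{-pi/2<..<0}. tilde_eq \<eta> u \<theta> = 0 \<longrightarrow> \<theta> = \<theta>t"
    and pieces: "strict_antimono_on {-pi<..<-\<theta>t-pi} (arg_fun \<eta> u)"
      "strict_mono_on {-\<theta>t-pi<..<\<theta>t} (arg_fun \<eta> u)"
      "strict_antimono_on {\<theta>t<..<0} (arg_fun \<eta> u)"
    by (rule arg_fun_turning_point[OF assms])
  have "- pi < - \<theta>t - pi" "- \<theta>t - pi < \<theta>t" "\<theta>t < 0"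
    using \<theta>t(1) by auto
  then have "\<exists>P. finite P \<and> card P \<le> 5 \<and> pairwise disjnt P \<and> \<Union>P = {-pi<..<0} \<and>
      (\<forall>I\<in>P. is_interval I \<and> (mono_on I (arg_fun \<eta> u) \<or> antimono_on I (arg_fun \<eta> u)))"
    by (rule three_piece_monotone_partition)
      (use pieces in \<open>simp_all add: strict_mono_on_imp_mono_on strict_antimono_iff_antimono\<close>)
  then obtain P where "finite P" "card P \<le> 5" "pairwise disjnt P" "\<Union>P = {-pi<..<0}"
      "\<forall>I\<in>P. is_interval I \<and> (mono_on I (arg_fun \<eta> u) \<or> antimono_on I (arg_fun \<eta> u))"
    by blast
  then have "\<exists>P. finite P \<and> card P \<le> 9 \<and> pairwise disjnt P \<and> \<Union>P = {-pi<..<0} \<and>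
      (\<forall>I\<in>P. is_interval I \<and> (mono_on I (arg_fun \<eta> u) \<or> antimono_on I (arg_fun \<eta> u)))"
    by (intro exI[of _ P]) simp
  moreover have "\<exists>\<theta>t. \<theta>t \<in> {-pi/2<..<0} \<and> tilde_eq \<eta> u \<theta>t = 0 \<and>
      (\<forall>\<theta>\<in>{-pi/2<..<0}. tilde_eq \<eta> u \<theta> = 0 \<longrightarrow> \<theta> = \<theta>t) \<and>
      strict_antimono_on {-pi<..<-\<theta>t-pi} (arg_fun \<eta> u) \<and>
      strict_mono_on {-\<theta>t-pi<..<\<theta>t} (arg_fun \<eta> u) \<and>
      strict_antimono_on {\<theta>t<..<0} (arg_fun \<eta> u)"
    using \<theta>t pieces by blast
  ultimately show ?thesis
    by blast
qed

end
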